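(* Let $X$ be a complex Banach space with open unit ball $B$, let $H(B)$ be a uniform algebra with $A_u(B)\subseteq H(B)\subseteq H^\infty(B)$, and let $x^{**}\in\bar B^{**}$. Then $Cl_B(f,x^{**})=\hat f(M_{x^{**}})$ for all $f\in H(B)$ if and only if the following holds: for every finite family $f_1,\dots,f_{n-1}\in A(B)$ and $f_n\in H(B)$ for which there is $\delta>0$ with $|f_1(x)|+\dots+|f_n(x)|\ge\delta$ for all $x\in B$, the functions $\hat f_1,\dots,\hat f_n$ have no common zero in $M_{x^{**}}$.
   Context: $H^\infty(B)$: bounded holomorphic functions on $B$ with sup norm; $A(B)$: closed subalgebra of $H^\infty(B)$ generated by $1$ and the restrictions to $B$ of $X^*$; $A_u(B)$: uniformly continuous holomorphic functions on $B$; a uniform algebra between $A_u(B)$ and $H^\infty(B)$ is a closed unital subalgebra of $H^\infty(B)$ containing $A_u(B)$. $M_{H(B)}$ is its spectrum, $\hat f$ the Gelfand transform. $\bar B^{**}$ is the closed unit ball of $X^{**}$. Cluster set: $Cl_B(f,x^{**})=\{\lambda:\exists\text{ net }(x_\alpha)\subset B,\ x_\alpha\to x^{**}\text{ weak-star},\ f(x_\alpha)\to\lambda\}$. Fiber: $M_{x^{**}}=\{\tau\in M_{H(B)}:\tau(L)=x^{**}(L)\ \forall L\in X^*\}$. *)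

theory Defs
  imports "HOL-Analysis.Analysis"
begin

class complex_banach = banach +
  fixes scaleC :: "complex \<Rightarrow> 'a \<Rightarrow> 'a" (infixr \<open>*\<^sub>C\<close> 75)
  assumes scaleC_add_right: "a *\<^sub>C (x + y) = a *\<^sub>C x + a *\<^sub>C y"
    and scaleC_add_left: "(a + b) *\<^sub>C x = a *\<^sub>C x + b *\<^sub>C x"
    and scaleC_scaleC: "a *\<^sub>C (b *\<^sub>C x) = (a * b) *\<^sub>C x"
    and scaleC_one: "1 *\<^sub>C x = x"
    and scaleC_of_real: "complex_of_real r *\<^sub>C x = r *\<^sub>R x"
    and norm_scaleC: "norm (a *\<^sub>C x) = cmod a * norm x"

definition complex_linear :: "('a::complex_banach \<Rightarrow> 'b::complex_banach) \<Rightarrow> bool" where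
  "complex_linear L \<longleftrightarrow> (\<forall>x y. L (x + y) = L x + L y) \<and> (\<forall>c x. L (c *\<^sub>C x) = c *\<^sub>C L x)"

instantiation complex :: complex_banach
begin
definition scaleC_complex :: "complex \<Rightarrow> complex \<Rightarrow> complex" where
  "scaleC_complex a z = a * z"
instance
  by standard (auto simp: scaleC_complex_def algebra_simps norm_mult scaleR_conv_of_real)
end

definition dual_space :: "('a::complex_banach \<Rightarrow> complex) set" where
  "dual_space = {L. complex_linear L \<and> bounded_linear L}"

text \<open>The closed unit ball of the bidual \<open>X**\<close>: complex-linear functionals on \<open>X*\<close>
  of norm at most 1 (extended by 0 outside \<open>X*\<close>).\<close>
definition bidual_ball :: "(('a::complex_banach \<Rightarrow> complex) \<Rightarrow> complex) set" where
  "bidual_ball = {\<phi>.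
     (\<forall>L1\<in>dual_space. \<forall>L2\<in>dual_space. \<phi> (\<lambda>x. L1 x + L2 x) = \<phi> L1 + \<phi> L2) \<and>
     (\<forall>c. \<forall>L\<in>dual_space. \<phi> (\<lambda>x. c * L x) = c * \<phi> L) \<and>
     (\<forall>L\<in>dual_space. cmod (\<phi> L) \<le> onorm L) \<and>
     (\<forall>L. L \<notin> dual_space \<longrightarrow> \<phi> L = 0)}"

definition holomorphic_on_B :: "('a::complex_banach \<Rightarrow> complex) \<Rightarrow> 'a set \<Rightarrow> bool" where
  "holomorphic_on_B f U \<longleftrightarrow>
     (\<forall>x\<in>U. \<exists>f'. (f has_derivative f') (at x) \<and> complex_linear f')"

text \<open>Functions on \<open>U\<close> are represented extensionally (value 0 outside \<open>U\<close>).\<close>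
definition Hinf :: "'a::complex_banach set \<Rightarrow> ('a \<Rightarrow> complex) set" where
  "Hinf U = {f. holomorphic_on_B f U \<and> bounded (f ` U) \<and> (\<forall>x. x \<notin> U \<longrightarrow> f x = 0)}"

definition Au :: "'a::complex_banach set \<Rightarrow> ('a \<Rightarrow> complex) set" where
  "Au U = {f \<in> Hinf U. uniformly_continuous_on U f}"

definition one_on :: "'a set \<Rightarrow> 'a \<Rightarrow> complex" where
  "one_on U = (\<lambda>x. if x \<in> U then 1 else 0)"

definition restr :: "'a set \<Rightarrow> ('a \<Rightarrow> complex) \<Rightarrow> 'a \<Rightarrow> complex" where
  "restr U f = (\<lambda>x. if x \<in> U then f x else 0)"

definition closed_unital_subalgebra :: "'a::complex_banach set \<Rightarrow> ('a \<Rightarrow> complex) set \<Rightarrow> bool" where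
  "closed_unital_subalgebra U A \<longleftrightarrow>
     A \<subseteq> Hinf U \<and> one_on U \<in> A \<and>
     (\<forall>f\<in>A. \<forall>g\<in>A. (\<lambda>x. f x + g x) \<in> A) \<and>
     (\<forall>f\<in>A. \<forall>g\<in>A. (\<lambda>x. f x * g x) \<in> A) \<and>
     (\<forall>c. \<forall>f\<in>A. (\<lambda>x. c * f x) \<in> A) \<and>
     (\<forall>(F :: nat \<Rightarrow> 'a \<Rightarrow> complex) g. (\<forall>n. F n \<in> A) \<and> g \<in> Hinf U \<and>
        (\<forall>\<epsilon>>0. \<exists>N. \<forall>n\<ge>N. \<forall>x\<in>U. cmod (F n x - g x) < \<epsilon>) \<longrightarrow> g \<in> A)"

definition uniform_algebra_between :: "'a::complex_banach set \<Rightarrow> ('a \<Rightarrow> complex) set \<Rightarrow> bool" where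
  "uniform_algebra_between U H \<longleftrightarrow> closed_unital_subalgebra U H \<and> Au U \<subseteq> H"

definition A_alg :: "'a::complex_banach set \<Rightarrow> ('a \<Rightarrow> complex) set" where
  "A_alg U = \<Inter>{A. closed_unital_subalgebra U A \<and> (\<forall>L\<in>dual_space. restr U L \<in> A)}"

definition spectrum_alg :: "('a \<Rightarrow> complex) set \<Rightarrow> (('a \<Rightarrow> complex) \<Rightarrow> complex) set" where
  "spectrum_alg H = {\<tau>.
     (\<forall>f\<in>H. \<forall>g\<in>H. \<tau> (\<lambda>x. f x + g x) = \<tau> f + \<tau> g) \<and>
     (\<forall>c. \<forall>f\<in>H. \<tau> (\<lambda>x. c * f x) = c * \<tau> f) \<and>
     (\<forall>f\<in>H. \<forall>g\<in>H. \<tau> (\<lambda>x. f x * g x) = \<tau> f * \<tau> g) \<and>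
     (\<exists>f\<in>H. \<tau> f \<noteq> 0)}"

definition gelfand :: "('a \<Rightarrow> complex) \<Rightarrow> (('a \<Rightarrow> complex) \<Rightarrow> complex) \<Rightarrow> complex" where
  "gelfand f = (\<lambda>\<tau>. \<tau> f)"

definition fiber :: "'a::complex_banach set \<Rightarrow> ('a \<Rightarrow> complex) set \<Rightarrow>
    (('a \<Rightarrow> complex) \<Rightarrow> complex) \<Rightarrow> (('a \<Rightarrow> complex) \<Rightarrow> complex) set" where
  "fiber U H \<phi> = {\<tau> \<in> spectrum_alg H. \<forall>L\<in>dual_space. \<tau> (restr U L) = \<phi> L}"

text \<open>Cluster set; nets in \<open>U\<close> are represented by proper filters on the space that
  eventually lie in \<open>U\<close>. Weak-star convergence to \<open>\<phi>\<close>: \<open>L(x\<^sub>\<alpha>) \<rightarrow> \<phi>(L)\<close> for all \<open>L \<in> X*\<close>.\<close>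
definition cluster_set :: "'a::complex_banach set \<Rightarrow> ('a \<Rightarrow> complex) \<Rightarrow>
    (('a \<Rightarrow> complex) \<Rightarrow> complex) \<Rightarrow> complex set" where
  "cluster_set U f \<phi> = {c. \<exists>F :: 'a filter. F \<noteq> bot \<and> eventually (\<lambda>x. x \<in> U) F \<and>
     (\<forall>L\<in>dual_space. ((\<lambda>x. L x) \<longlongrightarrow> \<phi> L) F) \<and> (f \<longlongrightarrow> c) F}"

end

theory Submission
  imports Defs
begin

text \<open>Characters in the fiber over \<open>x\<^sup>*\<^sup>*\<close> are contractive for the sup norm, so on
  \<open>A(B)\<close> they are the limits along every net tending weak-star to \<open>x\<^sup>*\<^sup>*\<close>. By Tychonoff
  every such net has a subnet along which all of \<open>H(B)\<close> converges, and the limits form a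
  character in the fiber; hence always \<open>Cl\<^sub>B(f, x\<^sup>*\<^sup>*) \<subseteq> f\<^sup>^(M\<^sub>x\<^sub>*\<^sub>*)\<close>. A value \<open>\<tau> f\<close> outside the cluster set is witnessed by
  finitely many functionals \<open>L\<^sub>i\<close> and \<open>\<epsilon> > 0\<close> such that \<open>|L\<^sub>i - x\<^sup>*\<^sup>*(L\<^sub>i)| < \<epsilon>\<close> and
  \<open>|f - \<tau> f| < \<epsilon>\<close> never hold together on \<open>B\<close>; these functions form a family bounded below
  on \<open>B\<close> with the common zero \<open>\<tau>\<close>, which is what the condition excludes.\<close>

lemma closed_unital_subalgebra_Hinf: "closed_unital_subalgebra U A \<Longrightarrow> A \<subseteq> Hinf U"
  by (simp add: closed_unital_subalgebra_def)

lemma closed_unital_subalgebra_one: "closed_unital_subalgebra U A \<Longrightarrow> one_on U \<in> A"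
  by (simp add: closed_unital_subalgebra_def)

lemma closed_unital_subalgebra_add:
  "closed_unital_subalgebra U A \<Longrightarrow> f \<in> A \<Longrightarrow> g \<in> A \<Longrightarrow> (\<lambda>x. f x + g x) \<in> A"
  by (simp add: closed_unital_subalgebra_def)

lemma closed_unital_subalgebra_mult:
  "closed_unital_subalgebra U A \<Longrightarrow> f \<in> A \<Longrightarrow> g \<in> A \<Longrightarrow> (\<lambda>x. f x * g x) \<in> A"
  by (simp add: closed_unital_subalgebra_def)

lemma closed_unital_subalgebra_scale:
  "closed_unital_subalgebra U A \<Longrightarrow> f \<in> A \<Longrightarrow> (\<lambda>x. c * f x) \<in> A"
  by (simp add: closed_unital_subalgebra_def)

lemma closed_unital_subalgebra_uniform_limit:
  fixes F :: "nat \<Rightarrow> 'a::complex_banach \<Rightarrow> complex"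
  assumes "closed_unital_subalgebra U A" "\<And>n. F n \<in> A" "g \<in> Hinf U"
    and "\<And>\<epsilon>. \<epsilon> > 0 \<Longrightarrow> \<exists>N. \<forall>n\<ge>N. \<forall>x\<in>U. cmod (F n x - g x) < \<epsilon>"
  shows "g \<in> A"
proof -
  have "\<forall>(F :: nat \<Rightarrow> 'a \<Rightarrow> complex) g. (\<forall>n. F n \<in> A) \<and> g \<in> Hinf U \<and>
      (\<forall>\<epsilon>>0. \<exists>N. \<forall>n\<ge>N. \<forall>x\<in>U. cmod (F n x - g x) < \<epsilon>) \<longrightarrow> g \<in> A"
    using assms(1) unfolding closed_unital_subalgebra_def by (elim conjE)
  then show ?thesis using assms(2-4) by blast
qed

lemma closed_unital_subalgebra_diff:
  assumes "closed_unital_subalgebra U A" "f \<in> A" "g \<in> A"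
  shows "(\<lambda>x. f x - g x) \<in> A"
  using closed_unital_subalgebra_add[OF assms(1,2) closed_unital_subalgebra_scale[OF assms(1,3), of "-1"]]
  by simp

lemma closed_unital_subalgebra_const:
  "closed_unital_subalgebra U A \<Longrightarrow> (\<lambda>x. c * one_on U x) \<in> A"
  by (intro closed_unital_subalgebra_scale closed_unital_subalgebra_one)

lemma closed_unital_subalgebra_sum:
  assumes A: "closed_unital_subalgebra U A" and "finite I" "\<And>i. i \<in> I \<Longrightarrow> F i \<in> A"
  shows "(\<lambda>x. \<Sum>i\<in>I. F i x) \<in> A"
  using assms(2,3)
proof (induction I rule: finite_induct)
  case empty
  show ?case using closed_unital_subalgebra_const[OF A, of 0] by simp
next
  case (insert i I)
  then show ?case by (simp add: closed_unital_subalgebra_add[OF A])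
qed

lemma closed_unital_subalgebra_power:
  assumes A: "closed_unital_subalgebra U A" and h: "h \<in> A"
  shows "(\<lambda>x. one_on U x * h x ^ m) \<in> A"
proof (induction m)
  case 0
  show ?case using closed_unital_subalgebra_one[OF A] by simp
next
  case (Suc m)
  then show ?case
    using closed_unital_subalgebra_mult[OF A Suc h] by (simp add: algebra_simps)
qed

lemma spectrum_alg_add:
  "\<tau> \<in> spectrum_alg A \<Longrightarrow> f \<in> A \<Longrightarrow> g \<in> A \<Longrightarrow> \<tau> (\<lambda>x. f x + g x) = \<tau> f + \<tau> g"
  by (simp add: spectrum_alg_def)

lemma spectrum_alg_scale:
  "\<tau> \<in> spectrum_alg A \<Longrightarrow> f \<in> A \<Longrightarrow> \<tau> (\<lambda>x. c * f x) = c * \<tau> f"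
  by (simp add: spectrum_alg_def)

lemma spectrum_alg_mult:
  "\<tau> \<in> spectrum_alg A \<Longrightarrow> f \<in> A \<Longrightarrow> g \<in> A \<Longrightarrow> \<tau> (\<lambda>x. f x * g x) = \<tau> f * \<tau> g"
  by (simp add: spectrum_alg_def)

lemma spectrum_alg_nonzero: "\<tau> \<in> spectrum_alg A \<Longrightarrow> \<exists>f\<in>A. \<tau> f \<noteq> 0"
  by (simp add: spectrum_alg_def)

lemma spectrum_alg_diff:
  assumes "\<tau> \<in> spectrum_alg A" "closed_unital_subalgebra U A" "f \<in> A" "g \<in> A"
  shows "\<tau> (\<lambda>x. f x - g x) = \<tau> f - \<tau> g"
  using spectrum_alg_add[OF assms(1,3) closed_unital_subalgebra_scale[OF assms(2,4), of "-1"]]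
    spectrum_alg_scale[OF assms(1,4), of "-1"]
  by simp

lemma spectrum_alg_one_on:
  assumes A: "closed_unital_subalgebra U A" and \<tau>: "\<tau> \<in> spectrum_alg A"
  shows "\<tau> (one_on U) = 1"
proof -
  obtain f where f: "f \<in> A" "\<tau> f \<noteq> 0" using spectrum_alg_nonzero[OF \<tau>] by blast
  have "f \<in> Hinf U" using f(1) closed_unital_subalgebra_Hinf[OF A] by blast
  then have "(\<lambda>x. one_on U x * f x) = f" by (auto simp: Hinf_def one_on_def)
  then have "\<tau> f = \<tau> (one_on U) * \<tau> f"
    using spectrum_alg_mult[OF \<tau> closed_unital_subalgebra_one[OF A] f(1)] by simp
  then show ?thesis using f(2) by simp
qed

lemma spectrum_alg_const:
  assumes "closed_unital_subalgebra U A" "\<tau> \<in> spectrum_alg A"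
  shows "\<tau> (\<lambda>x. c * one_on U x) = c"
  using spectrum_alg_scale[OF assms(2) closed_unital_subalgebra_one[OF assms(1)]]
    spectrum_alg_one_on[OF assms] by simp

lemma spectrum_alg_diff_const:
  assumes "closed_unital_subalgebra U A" "\<tau> \<in> spectrum_alg A" "f \<in> A"
  shows "\<tau> (\<lambda>x. f x - c * one_on U x) = \<tau> f - c"
  using spectrum_alg_diff[OF assms(2,1,3) closed_unital_subalgebra_const[OF assms(1)]]
    spectrum_alg_const[OF assms(1,2)] by simp

lemma Hinf_inverse:
  fixes U :: "'a::complex_banach set"
  assumes U: "open U" and h: "h \<in> Hinf U" and \<delta>: "\<delta> > 0" and h_ge: "\<And>x. x \<in> U \<Longrightarrow> \<delta> \<le> cmod (h x)"
  shows "restr U (\<lambda>x. 1 / h x) \<in> Hinf U"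
proof -
  have "holomorphic_on_B (restr U (\<lambda>x. 1 / h x)) U"
    unfolding holomorphic_on_B_def
  proof
    fix x assume x: "x \<in> U"
    obtain h' where h': "(h has_derivative h') (at x)" "complex_linear h'"
      using h x unfolding Hinf_def holomorphic_on_B_def by blast
    have "h x \<noteq> 0" using h_ge[OF x] \<delta> by auto
    then have "((\<lambda>w. 1 / w) has_field_derivative - 1 / (h x)\<^sup>2) (at (h x))"
      by (auto intro!: derivative_eq_intros simp: power2_eq_square)
    from has_derivative_compose[OF h'(1) this[unfolded has_field_derivative_def]]
    have "((\<lambda>y. 1 / h y) has_derivative (\<lambda>v. - 1 / (h x)\<^sup>2 * h' v)) (at x)"
      by simp
    then have "(restr U (\<lambda>x. 1 / h x) has_derivative (\<lambda>v. - 1 / (h x)\<^sup>2 * h' v)) (at x)"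
      by (rule has_derivative_transform_within_open[OF _ U x]) (simp add: restr_def)
    moreover have "complex_linear (\<lambda>v. - 1 / (h x)\<^sup>2 * h' v)"
      using h'(2) unfolding complex_linear_def by (simp add: scaleC_complex_def algebra_simps add_divide_distrib)
    ultimately show "\<exists>f'. (restr U (\<lambda>x. 1 / h x) has_derivative f') (at x) \<and> complex_linear f'"
      by blast
  qed
  moreover have "cmod (restr U (\<lambda>x. 1 / h x) x) \<le> 1 / \<delta>" if "x \<in> U" for x
    using h_ge[OF that] \<delta> by (simp add: restr_def norm_divide frac_le)
  then have "bounded (restr U (\<lambda>x. 1 / h x) ` U)"
    unfolding bounded_iff by blast
  ultimately show ?thesis by (simp add: Hinf_def restr_def)
qed

lemma norm_geometric_partial_sum_inverse_le:
  fixes z l :: complex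
  assumes z: "cmod z \<le> M" and l: "M < cmod l"
  shows "cmod ((\<Sum>m<N. z^m / l^Suc m) - 1 / (l - z)) \<le> (M / cmod l)^N / (cmod l - M)"
proof -
  have M: "0 \<le> M" using z norm_ge_zero order_trans by blast
  with l have "l \<noteq> 0" by auto
  have dist: "cmod l - M \<le> cmod (l - z)" using z norm_triangle_ineq2[of l z] by simp
  with l have "l - z \<noteq> 0" by auto
  have geometric: "(l - z) * (\<Sum>m<N. z^m / l^Suc m) = 1 - (z / l)^N"
  proof (induction N)
    case (Suc N)
    then have "(l - z) * (\<Sum>m<Suc N. z^m / l^Suc m) = 1 - (z / l)^N + (l - z) * (z^N / l^Suc N)"
      by (simp add: algebra_simps)
    also have "\<dots> = 1 - (z / l)^Suc N"
      using \<open>l \<noteq> 0\<close> by (simp add: field_simps power_divide)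
    finally show ?case .
  qed simp
  with \<open>l - z \<noteq> 0\<close> have "(\<Sum>m<N. z^m / l^Suc m) = (1 - (z / l)^N) / (l - z)"
    by (simp add: eq_divide_eq mult.commute)
  then have "(\<Sum>m<N. z^m / l^Suc m) - 1 / (l - z) = - ((z / l)^N / (l - z))"
    by (simp add: diff_divide_distrib[symmetric])
  then have "cmod ((\<Sum>m<N. z^m / l^Suc m) - 1 / (l - z)) = (cmod z / cmod l)^N / cmod (l - z)"
    by (simp add: norm_divide norm_power)
  also have "\<dots> \<le> (M / cmod l)^N / (cmod l - M)"
    using z l dist M by (intro frac_le power_mono divide_right_mono) auto
  finally show ?thesis .
qed

lemma closed_unital_subalgebra_inverse:
  fixes U :: "'a::complex_banach set"
  assumes A: "closed_unital_subalgebra U A" and U: "open U" and h: "h \<in> A" and M: "0 \<le> M"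
    and h_le: "\<And>x. x \<in> U \<Longrightarrow> cmod (h x) \<le> M" and l: "M < cmod l"
  shows "restr U (\<lambda>x. 1 / (l * one_on U x - h x)) \<in> A"
proof -
  define k where "k = restr U (\<lambda>x. 1 / (l * one_on U x - h x))"
  define P where "P N x = (\<Sum>m<N. (1 / l^Suc m) * (one_on U x * h x ^ m))" for N x
  have "(\<lambda>x. l * one_on U x - h x) \<in> Hinf U"
    using closed_unital_subalgebra_diff[OF A closed_unital_subalgebra_const[OF A] h]
      closed_unital_subalgebra_Hinf[OF A] by blast
  moreover have "cmod l - M \<le> cmod (l * one_on U x - h x)" if "x \<in> U" for x
    using that h_le[OF that] norm_triangle_ineq2[of l "h x"] by (simp add: one_on_def)
  ultimately have k: "k \<in> Hinf U"
    unfolding k_def using l by (intro Hinf_inverse[OF U]) auto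
  have P: "P N \<in> A" for N
    unfolding P_def
    by (intro closed_unital_subalgebra_sum[OF A] closed_unital_subalgebra_scale[OF A]
        closed_unital_subalgebra_power[OF A h]) simp
  have "\<exists>N. \<forall>n\<ge>N. \<forall>x\<in>U. cmod (P n x - k x) < e" if e: "e > 0" for e
  proof -
    have q: "0 \<le> M / cmod l" "M / cmod l < 1"
      using M l by (simp_all add: divide_less_eq)
    obtain N where N: "(M / cmod l)^N < e * (cmod l - M)"
      using real_arch_pow_inv[of "e * (cmod l - M)" "M / cmod l"] q e l by auto
    have "cmod (P n x - k x) < e" if "n \<ge> N" "x \<in> U" for n x
    proof -
      have "P n x - k x = (\<Sum>m<n. h x^m / l^Suc m) - 1 / (l - h x)"
        using \<open>x \<in> U\<close> by (simp add: P_def k_def restr_def one_on_def)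
      then have "cmod (P n x - k x) \<le> (M / cmod l)^n / (cmod l - M)"
        using norm_geometric_partial_sum_inverse_le[OF h_le[OF \<open>x \<in> U\<close>] l] by simp
      also have "\<dots> \<le> (M / cmod l)^N / (cmod l - M)"
        using q l \<open>n \<ge> N\<close> by (intro divide_right_mono power_decreasing) auto
      also have "\<dots> < e"
        using N l by (simp add: pos_divide_less_eq)
      finally show ?thesis .
    qed
    then show ?thesis by blast
  qed
  then show ?thesis
    unfolding k_def[symmetric] by (rule closed_unital_subalgebra_uniform_limit[OF A P k])
qed

text \<open>If \<open>\<tau> h\<close> lay outside the disc of radius \<open>M\<close>, the Neumann series would make
  \<open>\<tau> h - h\<close> invertible in the algebra while \<open>\<tau>\<close> annihilates it.\<close>

lemma spectrum_alg_norm_le: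
  fixes U :: "'a::complex_banach set"
  assumes A: "closed_unital_subalgebra U A" and U: "open U" and \<tau>: "\<tau> \<in> spectrum_alg A"
    and h: "h \<in> A" and M: "0 \<le> M" and h_le: "\<And>x. x \<in> U \<Longrightarrow> cmod (h x) \<le> M"
  shows "cmod (\<tau> h) \<le> M"
proof (rule ccontr)
  assume "\<not> cmod (\<tau> h) \<le> M"
  define l where "l = \<tau> h"
  define E where "E x = l * one_on U x - h x" for x
  define k where "k = restr U (\<lambda>x. 1 / E x)"
  have E: "E \<in> A"
    unfolding E_def
    by (intro closed_unital_subalgebra_diff[OF A] closed_unital_subalgebra_const[OF A] h)
  have k: "k \<in> A"
    unfolding k_def E_def
    using closed_unital_subalgebra_inverse[OF A U h M h_le] \<open>\<not> cmod (\<tau> h) \<le> M\<close> l_def by simp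
  have "E x \<noteq> 0" if "x \<in> U" for x
    using that h_le[OF that] \<open>\<not> cmod (\<tau> h) \<le> M\<close> by (auto simp: E_def one_on_def l_def)
  then have "(\<lambda>x. k x * E x) = one_on U"
    by (auto simp: k_def restr_def one_on_def)
  moreover have "\<tau> E = 0"
    unfolding E_def l_def
    using spectrum_alg_diff[OF \<tau> A closed_unital_subalgebra_const[OF A] h] spectrum_alg_const[OF A \<tau>]
    by simp
  ultimately have "\<tau> (one_on U) = 0"
    using spectrum_alg_mult[OF \<tau> k E] by simp
  then show False using spectrum_alg_one_on[OF A \<tau>] by simp
qed

lemma restr_dual_in_Au:
  fixes U :: "'a::complex_banach set"
  assumes U: "open U" "bounded U" and L: "L \<in> dual_space"
  shows "restr U L \<in> Au U"
proof -
  have lin: "bounded_linear L" "complex_linear L" using L by (auto simp: dual_space_def)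
  have "holomorphic_on_B (restr U L) U"
    unfolding holomorphic_on_B_def
  proof
    fix x assume x: "x \<in> U"
    have "(restr U L has_derivative L) (at x)"
      using bounded_linear_imp_has_derivative[OF lin(1)]
      by (rule has_derivative_transform_within_open[OF _ U(1) x]) (simp add: restr_def)
    with lin(2) show "\<exists>f'. (restr U L has_derivative f') (at x) \<and> complex_linear f'" by blast
  qed
  moreover have "restr U L ` U = L ` U" by (auto simp: restr_def)
  then have "bounded (restr U L ` U)" using bounded_linear_image[OF U(2) lin(1)] by simp
  moreover have "uniformly_continuous_on U L"
    using bounded_linear.uniformly_continuous_on[OF lin(1) uniformly_continuous_on_id] by simp
  then have "uniformly_continuous_on U (restr U L)"
    unfolding uniformly_continuous_on_def by (simp add: restr_def)
  ultimately show ?thesis by (auto simp: Au_def Hinf_def restr_def)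
qed

lemma uniform_algebra_between_restr_dual:
  assumes "uniform_algebra_between U H" "open U" "bounded U" "L \<in> dual_space"
  shows "restr U L \<in> H"
  using restr_dual_in_Au[OF assms(2-4)] assms(1) by (auto simp: uniform_algebra_between_def)

lemma A_alg_subset:
  "closed_unital_subalgebra U A \<Longrightarrow> (\<And>L. L \<in> dual_space \<Longrightarrow> restr U L \<in> A) \<Longrightarrow> A_alg U \<subseteq> A"
  unfolding A_alg_def by blast

lemma A_alg_restr_dual_diff_const:
  assumes "L \<in> dual_space"
  shows "(\<lambda>x. restr U L x - c * one_on U x) \<in> A_alg U"
  unfolding A_alg_def
  using assms closed_unital_subalgebra_diff closed_unital_subalgebra_const by blast

definition tends_weak_star :: "'a::complex_banach set \<Rightarrow> (('a \<Rightarrow> complex) \<Rightarrow> complex) \<Rightarrow> 'a filter \<Rightarrow> bool"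
  where "tends_weak_star U \<phi> F \<longleftrightarrow> eventually (\<lambda>x. x \<in> U) F \<and> (\<forall>L\<in>dual_space. (L \<longlongrightarrow> \<phi> L) F)"

lemma cluster_set_iff:
  "c \<in> cluster_set U f \<phi> \<longleftrightarrow> (\<exists>F. F \<noteq> bot \<and> tends_weak_star U \<phi> F \<and> (f \<longlongrightarrow> c) F)"
  by (simp add: cluster_set_def tends_weak_star_def)

lemma tends_weak_star_restr:
  assumes F: "tends_weak_star U \<phi> F" and L: "L \<in> dual_space"
  shows "(restr U L \<longlongrightarrow> \<phi> L) F"
proof -
  have "eventually (\<lambda>x. L x = restr U L x) F"
    using F by (auto simp: tends_weak_star_def restr_def elim: eventually_mono)
  then show ?thesis using F L unfolding tends_weak_star_def by (auto intro: tendsto_cong[THEN iffD1])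
qed

lemma tendsto_uniform_approximation:
  fixes g :: "'a \<Rightarrow> 'b::real_normed_vector"
  assumes U: "eventually (\<lambda>x. x \<in> U) F"
    and approx: "\<And>e. e > 0 \<Longrightarrow> \<exists>h c. (h \<longlongrightarrow> c) F \<and> norm (c - d) \<le> e \<and> (\<forall>x\<in>U. norm (h x - g x) \<le> e)"
  shows "(g \<longlongrightarrow> d) F"
proof (rule tendstoI)
  fix e :: real assume "e > 0"
  then obtain h c where h: "(h \<longlongrightarrow> c) F" "norm (c - d) \<le> e / 3" "\<forall>x\<in>U. norm (h x - g x) \<le> e / 3"
    using approx[of "e / 3"] by auto
  have "eventually (\<lambda>x. dist (h x) c < e / 3) F" by (rule tendstoD[OF h(1)]) (use \<open>e > 0\<close> in simp)
  with U show "eventually (\<lambda>x. dist (g x) d < e) F"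
  proof eventually_elim
    case (elim x)
    have "norm (g x - d) \<le> norm (h x - g x) + norm (h x - c) + norm (c - d)"
      using norm_triangle_ineq4[of "h x - g x" "h x - d"] norm_triangle_ineq[of "h x - c" "c - d"]
        norm_minus_commute[of d "g x"]
      by simp
    moreover have "norm (h x - g x) \<le> e / 3" using elim h(3) by blast
    ultimately show ?case using elim h(2) by (simp add: dist_norm)
  qed
qed

lemma closed_unital_subalgebra_tendsto_character:
  fixes U :: "'a::complex_banach set"
  assumes H: "closed_unital_subalgebra U H" and U: "open U" and \<tau>: "\<tau> \<in> spectrum_alg H"
    and F: "eventually (\<lambda>x. x \<in> U) F"
  shows "closed_unital_subalgebra U {g \<in> H. (g \<longlongrightarrow> \<tau> g) F}"
  unfolding closed_unital_subalgebra_def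
proof (intro conjI ballI allI impI)
  show "{g \<in> H. (g \<longlongrightarrow> \<tau> g) F} \<subseteq> Hinf U" using closed_unital_subalgebra_Hinf[OF H] by blast
next
  have "eventually (\<lambda>x. one_on U x = 1) F" using F by (rule eventually_mono) (simp add: one_on_def)
  then show "one_on U \<in> {g \<in> H. (g \<longlongrightarrow> \<tau> g) F}"
    using closed_unital_subalgebra_one[OF H] spectrum_alg_one_on[OF H \<tau>]
    by (simp add: tendsto_eventually)
next
  fix f g assume "f \<in> {g \<in> H. (g \<longlongrightarrow> \<tau> g) F}" "g \<in> {g \<in> H. (g \<longlongrightarrow> \<tau> g) F}"
  then show "(\<lambda>x. f x + g x) \<in> {g \<in> H. (g \<longlongrightarrow> \<tau> g) F}"
    and "(\<lambda>x. f x * g x) \<in> {g \<in> H. (g \<longlongrightarrow> \<tau> g) F}"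
    by (auto simp: closed_unital_subalgebra_add[OF H] closed_unital_subalgebra_mult[OF H]
        spectrum_alg_add[OF \<tau>] spectrum_alg_mult[OF \<tau>] intro: tendsto_add tendsto_mult)
next
  fix c f assume "f \<in> {g \<in> H. (g \<longlongrightarrow> \<tau> g) F}"
  then show "(\<lambda>x. c * f x) \<in> {g \<in> H. (g \<longlongrightarrow> \<tau> g) F}"
    by (auto simp: closed_unital_subalgebra_scale[OF H] spectrum_alg_scale[OF \<tau>] intro: tendsto_mult)
next
  fix Fs :: "nat \<Rightarrow> 'a \<Rightarrow> complex" and g
  assume lim: "(\<forall>n. Fs n \<in> {g \<in> H. (g \<longlongrightarrow> \<tau> g) F}) \<and> g \<in> Hinf U \<and>
    (\<forall>\<epsilon>>0. \<exists>N. \<forall>n\<ge>N. \<forall>x\<in>U. cmod (Fs n x - g x) < \<epsilon>)"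
  then have Fs: "\<And>n. Fs n \<in> H" and g: "g \<in> H"
    using closed_unital_subalgebra_uniform_limit[OF H] by blast+
  have "(g \<longlongrightarrow> \<tau> g) F"
  proof (rule tendsto_uniform_approximation[OF F])
    fix e :: real assume "e > 0"
    then obtain N where N: "\<forall>x\<in>U. cmod (Fs N x - g x) \<le> e"
      using lim by (meson less_imp_le order_refl)
    have "cmod (\<tau> (Fs N) - \<tau> g) \<le> e"
      using spectrum_alg_norm_le[OF H U \<tau> closed_unital_subalgebra_diff[OF H Fs g]] N \<open>e > 0\<close>
        spectrum_alg_diff[OF \<tau> H Fs g] by simp
    with N lim show "\<exists>h c. (h \<longlongrightarrow> c) F \<and> cmod (c - \<tau> g) \<le> e \<and> (\<forall>x\<in>U. cmod (h x - g x) \<le> e)"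
      by blast
  qed
  with g show "g \<in> {g \<in> H. (g \<longlongrightarrow> \<tau> g) F}" by simp
qed

lemma A_alg_tendsto_fiber:
  fixes U :: "'a::complex_banach set"
  assumes UH: "uniform_algebra_between U H" and U: "open U" "bounded U"
    and \<tau>: "\<tau> \<in> fiber U H \<phi>" and F: "tends_weak_star U \<phi> F" and g: "g \<in> A_alg U"
  shows "(g \<longlongrightarrow> \<tau> g) F"
proof -
  have H: "closed_unital_subalgebra U H" using UH by (simp add: uniform_algebra_between_def)
  have "A_alg U \<subseteq> {g \<in> H. (g \<longlongrightarrow> \<tau> g) F}"
  proof (rule A_alg_subset)
    show "closed_unital_subalgebra U {g \<in> H. (g \<longlongrightarrow> \<tau> g) F}"
      using closed_unital_subalgebra_tendsto_character[OF H U(1)] \<tau> F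
      by (simp add: fiber_def tends_weak_star_def)
    show "restr U L \<in> {g \<in> H. (g \<longlongrightarrow> \<tau> g) F}" if "L \<in> dual_space" for L
      using uniform_algebra_between_restr_dual[OF UH U that] tends_weak_star_restr[OF F that] \<tau> that
      by (simp add: fiber_def)
  qed
  with g show ?thesis by blast
qed

lemma inf_filtercomap_neq_bot:
  assumes "inf N (filtermap f F) \<noteq> bot"
  shows "inf F (filtercomap f N) \<noteq> bot"
proof
  assume "inf F (filtercomap f N) = bot"
  then obtain Q R where QR: "eventually Q F" "eventually R N" "\<And>x. Q x \<Longrightarrow> \<not> R (f x)"
    unfolding eventually_False[symmetric] eventually_inf eventually_filtercomap by metis
  have "eventually (\<lambda>y. \<not> R y) (filtermap f F)"
    unfolding eventually_filtermap using QR(1) by (rule eventually_mono) (use QR(3) in blast)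
  with QR(2) have "eventually (\<lambda>_. False) (inf N (filtermap f F))"
    unfolding eventually_inf by blast
  with assms show False by (simp add: eventually_False)
qed

text \<open>Tychonoff: the evaluation map \<open>x \<mapsto> (g x)\<^sub>g\<close> sends \<open>F\<close> into a compact product of
  discs, where it has a cluster point \<open>p\<close>; pulling back the neighbourhoods of \<open>p\<close> refines
  \<open>F\<close> to a proper filter along which every \<open>g\<close> converges to \<open>p g\<close>.\<close>

lemma exists_refinement_tendsto_all:
  fixes G :: "('a \<Rightarrow> complex) set"
  assumes bounded: "\<And>g. g \<in> G \<Longrightarrow> bounded (g ` U)" and F: "F \<noteq> bot" "eventually (\<lambda>x. x \<in> U) F"
  obtains F' p where "F' \<noteq> bot" "F' \<le> F" "\<And>g. g \<in> G \<Longrightarrow> (g \<longlongrightarrow> p g) F'"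
proof -
  have "\<forall>g\<in>G. \<exists>a. \<forall>x\<in>U. cmod (g x) \<le> a"
    using bounded unfolding bounded_iff by blast
  then obtain b where b: "\<And>g x. g \<in> G \<Longrightarrow> x \<in> U \<Longrightarrow> cmod (g x) \<le> b g"
    by (metis bchoice)
  define ev where "ev x = (\<lambda>g. if g \<in> G then g x else 0)" for x
  define K where "K = PiE UNIV (\<lambda>g. if g \<in> G then cball (0::complex) (b g) else {0})"
  have "compactin (product_topology (\<lambda>_. euclidean) UNIV) K"
    unfolding K_def compactin_PiE by (auto simp: compact_cball)
  then have "compact K" by (simp add: euclidean_product_topology)
  moreover have "filtermap ev F \<noteq> bot" using F(1) by (simp add: filtermap_bot_iff)
  moreover have "eventually (\<lambda>q. q \<in> K) (filtermap ev F)"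
    unfolding eventually_filtermap using F(2)
    by (rule eventually_mono) (auto simp: K_def ev_def PiE_iff b)
  ultimately obtain p where p: "inf (nhds p) (filtermap ev F) \<noteq> bot"
    unfolding compact_filter by blast
  define F' where "F' = inf F (filtercomap ev (nhds p))"
  show thesis
  proof
    show "F' \<noteq> bot" using inf_filtercomap_neq_bot[OF p] by (simp add: F'_def)
    show "F' \<le> F" by (simp add: F'_def)
    show "(g \<longlongrightarrow> p g) F'" if "g \<in> G" for g
    proof -
      have "((\<lambda>q. q g) \<longlongrightarrow> p g) (at p)"
        using continuous_on_product_coordinates[of g] unfolding continuous_on_def by blast
      then have "((\<lambda>x. ev x g) \<longlongrightarrow> p g) (filtercomap ev (nhds p))"
        using tendsto_compose filterlim_filtercomap by fastforce
      then show ?thesis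
        using \<open>g \<in> G\<close> by (simp add: ev_def F'_def tendsto_mono[OF inf_le2])
    qed
  qed
qed

lemma spectrum_alg_of_limits:
  assumes H: "closed_unital_subalgebra U H" and F: "F \<noteq> bot" "eventually (\<lambda>x. x \<in> U) F"
    and p: "\<And>g. g \<in> H \<Longrightarrow> (g \<longlongrightarrow> p g) F"
  shows "p \<in> spectrum_alg H"
  unfolding spectrum_alg_def
proof (intro CollectI conjI ballI allI)
  fix f g assume f: "f \<in> H" and g: "g \<in> H"
  show "p (\<lambda>x. f x + g x) = p f + p g"
    using tendsto_unique[OF F(1) p[OF closed_unital_subalgebra_add[OF H f g]]
        tendsto_add[OF p[OF f] p[OF g]]] .
  show "p (\<lambda>x. f x * g x) = p f * p g"
    using tendsto_unique[OF F(1) p[OF closed_unital_subalgebra_mult[OF H f g]]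
        tendsto_mult[OF p[OF f] p[OF g]]] .
next
  fix c f assume f: "f \<in> H"
  show "p (\<lambda>x. c * f x) = c * p f"
    using tendsto_unique[OF F(1) p[OF closed_unital_subalgebra_scale[OF H f]]
        tendsto_mult[OF tendsto_const p[OF f]]] .
next
  have "eventually (\<lambda>x. one_on U x = 1) F" using F(2) by (rule eventually_mono) (simp add: one_on_def)
  then have "p (one_on U) = 1"
    using tendsto_unique[OF F(1) p[OF closed_unital_subalgebra_one[OF H]]]
    by (simp add: tendsto_eventually)
  then show "\<exists>f\<in>H. p f \<noteq> 0" using closed_unital_subalgebra_one[OF H] by force
qed

lemma cluster_set_subset_gelfand_fiber:
  fixes U :: "'a::complex_banach set"
  assumes UH: "uniform_algebra_between U H" and U: "open U" "bounded U" and f: "f \<in> H"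
  shows "cluster_set U f \<phi> \<subseteq> gelfand f ` fiber U H \<phi>"
proof
  fix c assume "c \<in> cluster_set U f \<phi>"
  then obtain F where F: "F \<noteq> bot" "tends_weak_star U \<phi> F" "(f \<longlongrightarrow> c) F"
    by (auto simp: cluster_set_iff)
  have H: "closed_unital_subalgebra U H" using UH by (simp add: uniform_algebra_between_def)
  have "bounded (g ` U)" if "g \<in> H" for g
    using that closed_unital_subalgebra_Hinf[OF H] by (auto simp: Hinf_def)
  then obtain F' p where F': "F' \<noteq> bot" "F' \<le> F" and p: "\<And>g. g \<in> H \<Longrightarrow> (g \<longlongrightarrow> p g) F'"
    using exists_refinement_tendsto_all F(1,2) unfolding tends_weak_star_def by metis
  have lim: "p g = d" if "g \<in> H" "(g \<longlongrightarrow> d) F" for g d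
    using tendsto_unique[OF F'(1) p[OF that(1)] tendsto_mono[OF F'(2) that(2)]] .
  have "p \<in> spectrum_alg H"
    using spectrum_alg_of_limits[OF H F'(1) _ p] F(2) F'(2) by (auto simp: tends_weak_star_def filter_leD)
  moreover have "p (restr U L) = \<phi> L" if "L \<in> dual_space" for L
    using lim uniform_algebra_between_restr_dual[OF UH U that] tends_weak_star_restr[OF F(2) that] by blast
  ultimately have "p \<in> fiber U H \<phi>" by (simp add: fiber_def)
  moreover have "c = gelfand f p" using lim[OF f F(3)] by (simp add: gelfand_def)
  ultimately show "c \<in> gelfand f ` fiber U H \<phi>" by blast
qed

lemma in_cluster_setI:
  assumes approx: "\<And>Ls e. finite Ls \<Longrightarrow> Ls \<subseteq> dual_space \<Longrightarrow> e > 0 \<Longrightarrow>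
    \<exists>x\<in>U. (\<forall>L\<in>Ls. cmod (L x - \<phi> L) < e) \<and> cmod (f x - c) < e"
  shows "c \<in> cluster_set U f \<phi>"
proof -
  define B :: "(('a \<Rightarrow> complex) set \<times> real) set"
    where "B = {(Ls, e). finite Ls \<and> Ls \<subseteq> dual_space \<and> e > 0}"
  define W where "W = (\<lambda>(Ls, e). {x\<in>U. (\<forall>L\<in>Ls. cmod (L x - \<phi> L) < e) \<and> cmod (f x - c) < e})"
  define F where "F = (INF b\<in>B. principal (W b))"
  have ev: "eventually P F \<longleftrightarrow> (\<exists>b\<in>B. \<forall>x\<in>W b. P x)" for P
    unfolding F_def eventually_principal[symmetric]
  proof (rule eventually_INF_base)
    have "({}, 1) \<in> B" by (simp add: B_def)
    then show "B \<noteq> {}" by blast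
    fix a b assume "a \<in> B" "b \<in> B"
    then show "\<exists>x\<in>B. principal (W x) \<le> inf (principal (W a)) (principal (W b))"
      by (intro bexI[of _ "(fst a \<union> fst b, min (snd a) (snd b))"]) (auto simp: B_def W_def)
  qed
  have "F \<noteq> bot"
    using approx by (force simp: ev eventually_False[symmetric] B_def W_def)
  moreover have "eventually (\<lambda>x. x \<in> U) F"
    unfolding ev by (rule bexI[of _ "({}, 1)"]) (auto simp: B_def W_def)
  moreover have "(L \<longlongrightarrow> \<phi> L) F" if "L \<in> dual_space" for L
  proof (rule tendstoI)
    fix e :: real assume "e > 0"
    with that show "eventually (\<lambda>x. dist (L x) (\<phi> L) < e) F"
      unfolding ev by (intro bexI[of _ "({L}, e)"]) (auto simp: B_def W_def dist_norm)
  qed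
  moreover have "(f \<longlongrightarrow> c) F"
  proof (rule tendstoI)
    fix e :: real assume "e > 0"
    then show "eventually (\<lambda>x. dist (f x) c < e) F"
      unfolding ev by (intro bexI[of _ "({}, e)"]) (auto simp: B_def W_def dist_norm)
  qed
  ultimately show ?thesis by (auto simp: cluster_set_iff tends_weak_star_def)
qed

definition fiber_corona_property ::
    "'a::complex_banach set \<Rightarrow> ('a \<Rightarrow> complex) set \<Rightarrow> (('a \<Rightarrow> complex) \<Rightarrow> complex) \<Rightarrow> bool"
  where "fiber_corona_property U H \<phi> \<longleftrightarrow>
    (\<forall>(n::nat) (fs :: nat \<Rightarrow> 'a \<Rightarrow> complex).
       n \<ge> 1 \<and> (\<forall>i\<in>{1..<n}. fs i \<in> A_alg U) \<and> fs n \<in> H \<and>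
       (\<exists>\<delta>>0. \<forall>x\<in>U. (\<Sum>i=1..n. cmod (fs i x)) \<ge> \<delta>)
       \<longrightarrow> \<not> (\<exists>\<tau>\<in>fiber U H \<phi>. \<forall>i\<in>{1..n}. gelfand (fs i) \<tau> = 0))"

text \<open>A common zero \<open>\<tau>\<close> puts \<open>0\<close> into the cluster set of \<open>f\<^sub>n\<close>, and along the
  corresponding filter also \<open>f\<^sub>1, \<dots>, f\<^sub>n\<^sub>-\<^sub>1 \<in> A(U)\<close> tend to \<open>0\<close>, which the lower
  bound \<open>\<delta>\<close> forbids.\<close>

lemma fiber_corona_property_if_cluster_set_eq:
  fixes U :: "'a::complex_banach set"
  assumes UH: "uniform_algebra_between U H" and U: "open U" "bounded U"
    and eq: "\<forall>f\<in>H. cluster_set U f \<phi> = gelfand f ` fiber U H \<phi>"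
  shows "fiber_corona_property U H \<phi>"
  unfolding fiber_corona_property_def
proof (intro allI impI notI)
  fix n :: nat and fs :: "nat \<Rightarrow> 'a \<Rightarrow> complex"
  assume "n \<ge> 1 \<and> (\<forall>i\<in>{1..<n}. fs i \<in> A_alg U) \<and> fs n \<in> H \<and>
    (\<exists>\<delta>>0. \<forall>x\<in>U. (\<Sum>i=1..n. cmod (fs i x)) \<ge> \<delta>)"
  then obtain \<delta> where n: "n \<ge> 1" and A: "\<And>i. i \<in> {1..<n} \<Longrightarrow> fs i \<in> A_alg U" and H: "fs n \<in> H"
    and \<delta>: "\<delta> > 0" "\<And>x. x \<in> U \<Longrightarrow> (\<Sum>i=1..n. cmod (fs i x)) \<ge> \<delta>"
    by blast
  assume "\<exists>\<tau>\<in>fiber U H \<phi>. \<forall>i\<in>{1..n}. gelfand (fs i) \<tau> = 0"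
  then obtain \<tau> where \<tau>: "\<tau> \<in> fiber U H \<phi>" and zero: "\<And>i. i \<in> {1..n} \<Longrightarrow> \<tau> (fs i) = 0"
    by (auto simp: gelfand_def)
  have "0 \<in> gelfand (fs n) ` fiber U H \<phi>"
    using \<tau> zero[of n] n by (force simp: gelfand_def)
  then have "0 \<in> cluster_set U (fs n) \<phi>" using eq H by blast
  then obtain F where F: "F \<noteq> bot" "tends_weak_star U \<phi> F" "(fs n \<longlongrightarrow> 0) F"
    by (auto simp: cluster_set_iff)
  have "(fs i \<longlongrightarrow> 0) F" if "i \<in> {1..n}" for i
  proof (cases "i = n")
    case False
    with that have "(fs i \<longlongrightarrow> \<tau> (fs i)) F"
      using A_alg_tendsto_fiber[OF UH U \<tau> F(2) A] by simp
    with that show ?thesis using zero by simp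
  qed (use F(3) in simp)
  then have "((\<lambda>x. \<Sum>i=1..n. cmod (fs i x)) \<longlongrightarrow> (\<Sum>i=1..n. cmod (0::complex))) F"
    by (intro tendsto_sum tendsto_norm)
  then have "((\<lambda>x. \<Sum>i=1..n. cmod (fs i x)) \<longlongrightarrow> 0) F" by simp
  then have "eventually (\<lambda>x. (\<Sum>i=1..n. cmod (fs i x)) < \<delta>) F"
    using order_tendstoD(2) \<delta>(1) by blast
  moreover have "eventually (\<lambda>x. x \<in> U) F" using F(2) by (simp add: tends_weak_star_def)
  ultimately have "eventually (\<lambda>_. False) F"
    by eventually_elim (use \<delta>(2) in force)
  with F(1) show False by (simp add: eventually_False)
qed

lemma fiber_restr_dual_diff_const:
  fixes U :: "'a::complex_banach set"
  assumes UH: "uniform_algebra_between U H" and U: "open U" "bounded U"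
    and \<tau>: "\<tau> \<in> fiber U H \<phi>" and L: "L \<in> dual_space"
  shows "\<tau> (\<lambda>x. restr U L x - c * one_on U x) = \<phi> L - c"
proof -
  have H: "closed_unital_subalgebra U H" using UH by (simp add: uniform_algebra_between_def)
  have \<tau>H: "\<tau> \<in> spectrum_alg H" and "\<tau> (restr U L) = \<phi> L" using \<tau> L by (auto simp: fiber_def)
  with spectrum_alg_diff_const[OF H \<tau>H uniform_algebra_between_restr_dual[OF UH U L]] show ?thesis
    by simp
qed

lemma fiber_corona_property_approximate_point:
  fixes U :: "'a::complex_banach set"
  assumes UH: "uniform_algebra_between U H" and U: "open U" "bounded U"
    and corona: "fiber_corona_property U H \<phi>" and \<tau>: "\<tau> \<in> fiber U H \<phi>" and f: "f \<in> H"
    and Ls: "finite Ls" "Ls \<subseteq> dual_space" and "e > 0"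
  shows "\<exists>x\<in>U. (\<forall>L\<in>Ls. cmod (L x - \<phi> L) < e) \<and> cmod (f x - \<tau> f) < e"
proof (rule ccontr)
  assume none: "\<not> (\<exists>x\<in>U. (\<forall>L\<in>Ls. cmod (L x - \<phi> L) < e) \<and> cmod (f x - \<tau> f) < e)"
  have H: "closed_unital_subalgebra U H" using UH by (simp add: uniform_algebra_between_def)
  obtain xs where xs: "set xs = Ls" using finite_list[OF Ls(1)] by blast
  define n where "n = Suc (length xs)"
  define fs where "fs i = (if i < n then (\<lambda>x. restr U (xs!(i-1)) x - \<phi> (xs!(i-1)) * one_on U x)
    else (\<lambda>x. f x - \<tau> f * one_on U x))" for i
  have dual: "xs!(i-1) \<in> dual_space" if "i \<in> {1..<n}" for i
    using that xs Ls(2) by (auto simp: n_def)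
  have A: "\<forall>i\<in>{1..<n}. fs i \<in> A_alg U"
    using dual by (auto simp: fs_def intro!: A_alg_restr_dual_diff_const)
  have last: "fs n \<in> H"
    using closed_unital_subalgebra_diff[OF H f closed_unital_subalgebra_const[OF H]] by (simp add: fs_def)
  have bound: "(\<Sum>i=1..n. cmod (fs i x)) \<ge> e" if x: "x \<in> U" for x
  proof -
    have le: "cmod (fs j x) \<le> (\<Sum>i=1..n. cmod (fs i x))" if "j \<in> {1..n}" for j
      by (rule member_le_sum) (use that in auto)
    from none x consider j where "j < length xs" "e \<le> cmod ((xs!j) x - \<phi> (xs!j))"
      | "e \<le> cmod (f x - \<tau> f)"
      using xs by (fastforce simp: in_set_conv_nth not_less)
    then show ?thesis
    proof cases
      case 1
      then show ?thesis using le[of "Suc j"] x by (simp add: fs_def n_def restr_def one_on_def)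
    next
      case 2
      then show ?thesis using le[of n] x by (simp add: fs_def n_def one_on_def)
    qed
  qed
  have "gelfand (fs i) \<tau> = 0" if "i \<in> {1..n}" for i
    using that fiber_restr_dual_diff_const[OF UH U \<tau> dual] \<tau>
      spectrum_alg_diff_const[OF H _ f, of \<tau> "\<tau> f"]
    by (auto simp: fs_def gelfand_def fiber_def)
  moreover have "n \<ge> 1 \<and> (\<forall>i\<in>{1..<n}. fs i \<in> A_alg U) \<and> fs n \<in> H \<and>
    (\<exists>\<delta>>0. \<forall>x\<in>U. (\<Sum>i=1..n. cmod (fs i x)) \<ge> \<delta>)"
    using A last bound \<open>e > 0\<close> by (auto simp: n_def)
  with corona have "\<not> (\<exists>\<tau>\<in>fiber U H \<phi>. \<forall>i\<in>{1..n}. gelfand (fs i) \<tau> = 0)"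
    unfolding fiber_corona_property_def by blast
  ultimately show False using \<tau> by blast
qed

lemma gelfand_fiber_subset_cluster_set:
  fixes U :: "'a::complex_banach set"
  assumes UH: "uniform_algebra_between U H" and U: "open U" "bounded U"
    and corona: "fiber_corona_property U H \<phi>" and f: "f \<in> H"
  shows "gelfand f ` fiber U H \<phi> \<subseteq> cluster_set U f \<phi>"
proof
  fix c assume "c \<in> gelfand f ` fiber U H \<phi>"
  then obtain \<tau> where "\<tau> \<in> fiber U H \<phi>" and "c = \<tau> f" by (auto simp: gelfand_def)
  with fiber_corona_property_approximate_point[OF UH U corona _ f]
  show "c \<in> cluster_set U f \<phi>" by (auto intro: in_cluster_setI)
qed

text \<open>The argument works for every functional \<open>\<phi>\<close>.\<close>

theorem mainTheorem4:
  fixes H :: "('a::complex_banach \<Rightarrow> complex) set"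
    and \<phi> :: "('a \<Rightarrow> complex) \<Rightarrow> complex"
  assumes "uniform_algebra_between (ball 0 1) H"
    and "\<phi> \<in> bidual_ball"
  shows "(\<forall>f\<in>H. cluster_set (ball 0 1) f \<phi> = gelfand f ` fiber (ball 0 1) H \<phi>) \<longleftrightarrow>
    (\<forall>(n::nat) (fs :: nat \<Rightarrow> 'a \<Rightarrow> complex).
       n \<ge> 1 \<and> (\<forall>i\<in>{1..<n}. fs i \<in> A_alg (ball 0 1)) \<and> fs n \<in> H \<and>
       (\<exists>\<delta>>0. \<forall>x\<in>ball 0 1. (\<Sum>i=1..n. cmod (fs i x)) \<ge> \<delta>)
       \<longrightarrow> \<not> (\<exists>\<tau>\<in>fiber (ball 0 1) H \<phi>. \<forall>i\<in>{1..n}. gelfand (fs i) \<tau> = 0))"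
proof -
  have U: "open (ball (0::'a) 1)" "bounded (ball (0::'a) 1)" by auto
  have "(\<forall>f\<in>H. cluster_set (ball 0 1) f \<phi> = gelfand f ` fiber (ball 0 1) H \<phi>) \<longleftrightarrow>
    fiber_corona_property (ball 0 1) H \<phi>"
  proof
    assume "\<forall>f\<in>H. cluster_set (ball 0 1) f \<phi> = gelfand f ` fiber (ball 0 1) H \<phi>"
    then show "fiber_corona_property (ball 0 1) H \<phi>"
      by (rule fiber_corona_property_if_cluster_set_eq[OF assms(1) U])
  next
    assume "fiber_corona_property (ball 0 1) H \<phi>"
    then show "\<forall>f\<in>H. cluster_set (ball 0 1) f \<phi> = gelfand f ` fiber (ball 0 1) H \<phi>"
      using cluster_set_subset_gelfand_fiber[OF assms(1) U]
        gelfand_fiber_subset_cluster_set[OF assms(1) U] by blast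
  qed
  then show ?thesis by (simp only: fiber_corona_property_def)
qed

end
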